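(* Let $M=\mathbb R^3\setminus B(0,1)$, where $B(0,1)$ is the open unit ball. Let $A$ be a constant such that $\|v\|_{L^6(\mathbb R^3)}\le A\|\nabla v\|_{L^2(\mathbb R^3)}$ for every $v\in C^1_c(\mathbb R^3)$. Then for every $u\in C^1_c(M)$, $$\|u\|_{L^6(M)}\le 2(2+\sqrt2)\,A\,\|\nabla u\|_{L^2(M)}.$$
   Context: Norms and gradients are Euclidean; $C^1_c(M)$ denotes $C^1$ functions with compact support in $M$ (the support may meet the sphere $\partial M$). *)

theory Defs
  imports "HOL-Analysis.Analysis"
begin

definition extM :: "(real^3) set" where
  "extM = - ball 0 1"

definition C1c_R3 :: "(real^3 \<Rightarrow> real) \<Rightarrow> (real^3 \<Rightarrow> real^3) \<Rightarrow> bool" where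
  "C1c_R3 v G \<longleftrightarrow>
     (\<forall>x. GDERIV v x :> G x) \<and> continuous_on UNIV G \<and>
     compact (closure {x. v x \<noteq> 0})"

text \<open>u is in C^1_c(M) with gradient field G: u is continuous on M, differentiable in the
  interior of M with gradient G, G extends continuously to all of M (including the sphere),
  and the support of u in M is compact (it may meet the sphere).\<close>
definition C1c_M :: "(real^3 \<Rightarrow> real) \<Rightarrow> (real^3 \<Rightarrow> real^3) \<Rightarrow> bool" where
  "C1c_M u G \<longleftrightarrow>
     continuous_on extM u \<and>
     (\<forall>x\<in>interior extM. GDERIV u x :> G x) \<and> continuous_on extM G \<and>
     compact (closure {x\<in>extM. u x \<noteq> 0})"

definition Lp_norm_on :: "real \<Rightarrow> (real^3) set \<Rightarrow> (real^3 \<Rightarrow> real) \<Rightarrow> real" where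
  "Lp_norm_on p S f = (LINT x:S|lborel. \<bar>f x\<bar> powr p) powr (1/p)"

end

theory Submission
  imports Defs
begin

(* Reflect u into the unit ball by w(x) = 3 u(x/|x|^2) - 2 u(x/|x|^3). Both inversions fix the
   unit sphere, so u and w glue to a function v in C^1_c(R^3); near the sphere this needs u to
   be differentiable up to the boundary, which follows from the continuity of the gradient.
   The inversion x/|x|^k has Jacobian determinant of modulus (k-1)/|x|^(3k) and derivative of
   norm at most (k-1)/|x|^k, so changing variables bounds the Dirichlet energy of w on the ball
   by 34 times that of u on M. Hence the gradient of v has L^2 norm at most sqrt 35 < 6 times
   that of u, and the Sobolev inequality for v, restricted to M, gives the claim. *)

section \<open>Radial inversions\<close>

definition radial_inversion :: "nat \<Rightarrow> 'a::real_normed_vector \<Rightarrow> 'a" where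
  "radial_inversion k x = (1 / norm x ^ k) *\<^sub>R x"

definition radial_inversion_deriv :: "nat \<Rightarrow> 'a::real_inner \<Rightarrow> 'a \<Rightarrow> 'a" where
  "radial_inversion_deriv k x h = (1 / norm x ^ k) *\<^sub>R h - (k * (x \<bullet> h) / norm x ^ (k + 2)) *\<^sub>R x"

lemma has_derivative_radial_inversion:
  fixes x :: "'a::real_inner"
  assumes "x \<noteq> 0"
  shows "(radial_inversion k has_derivative radial_inversion_deriv k x) (at x within S)"
proof -
  have "norm x * norm x ^ (m - 1) = norm x ^ m" if "0 < m" for m
    using that by (simp add: power_eq_if)
  then show ?thesis
    unfolding radial_inversion_def using assms
    by (cases k) (auto intro!: derivative_eq_intros has_derivative_norm[THEN has_derivative_at_withinI]
        simp: fun_eq_iff radial_inversion_deriv_def sgn_div_norm inner_commute field_simps)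
qed

lemma norm_radial_inversion: "norm (radial_inversion k x) = norm x / norm x ^ k"
  by (simp add: radial_inversion_def)

lemma radial_inversion_sphere: "norm x = 1 \<Longrightarrow> radial_inversion k x = x"
  by (simp add: radial_inversion_def)

lemma radial_inversion_deriv_sphere:
  "norm x = 1 \<Longrightarrow> radial_inversion_deriv k x h = h - (k * (x \<bullet> h)) *\<^sub>R x"
  by (simp add: radial_inversion_deriv_def)

lemma inj_on_radial_inversion:
  assumes "2 \<le> k"
  shows "inj_on (radial_inversion k) (- {0})"
proof (rule inj_onI)
  fix x y :: 'a assume x: "x \<in> - {0}" and y: "y \<in> - {0}"
    and eq: "radial_inversion k x = radial_inversion k y"
  have "norm x / norm x ^ k = norm y / norm y ^ k"
    using arg_cong[OF eq, of norm] by (simp add: norm_radial_inversion)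
  then have "norm x ^ (k - 1) = norm y ^ (k - 1)"
    using x y assms by (simp add: power_diff) (metis inverse_divide)
  then have "norm x = norm y"
    using assms by (simp add: power_eq_iff_eq_base)
  then show "x = y" using eq x y by (simp add: radial_inversion_def)
qed

lemma norm_radial_inversion_deriv_le:
  fixes x :: "'a::real_inner"
  assumes "x \<noteq> 0" "2 \<le> k"
  shows "norm (radial_inversion_deriv k x h) \<le> (real k - 1) * norm h / norm x ^ k"
proof -
  define n where "n = norm x"
  define c where "c = x \<bullet> h"
  have n: "0 < n" using assms by (simp add: n_def)
  have xx: "x \<bullet> x = n^2" by (simp add: n_def power2_norm_eq_inner)
  have cs: "c^2 \<le> n^2 * norm h ^ 2"
    unfolding c_def n_def by (metis Cauchy_Schwarz_ineq power_mult_distrib power2_norm_eq_inner)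
  have k: "0 \<le> real k * real k - 2 * real k" using assms by (simp add: algebra_simps)
  have "norm (radial_inversion_deriv k x h) ^ 2
      = (norm h ^ 2 + (real k * real k - 2 * real k) * (c^2 / n^2)) / (n ^ k)^2"
    using n unfolding power2_norm_eq_inner
    by (simp add: radial_inversion_deriv_def inner_diff_left inner_diff_right inner_commute
        xx c_def n_def[symmetric] power_add field_simps power2_eq_square)
  also have "\<dots> \<le> (norm h ^ 2 + (real k * real k - 2 * real k) * norm h ^ 2) / (n ^ k)^2"
    using cs n k by (intro divide_right_mono add_left_mono mult_left_mono) (auto simp: field_simps)
  also have "\<dots> = ((real k - 1) * norm h / n ^ k)^2"
    by (simp add: power_divide power_mult_distrib algebra_simps power2_eq_square)
  finally show ?thesis
    using assms n by (simp add: n_def power2_le_iff_abs_le)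
qed

lemma radial_inversion_deriv_symmetric:
  "radial_inversion_deriv k x h \<bullet> w = h \<bullet> radial_inversion_deriv k x w"
  by (simp add: radial_inversion_deriv_def inner_diff_left inner_diff_right inner_commute algebra_simps)

lemma continuous_on_radial_inversion:
  "0 \<notin> A \<Longrightarrow> continuous_on A (radial_inversion k)"
  unfolding radial_inversion_def by (intro continuous_intros) auto

lemma det_scalar_minus_rank_one_3:
  fixes M :: "real^3^3" and x :: "real^3"
  assumes M: "\<And>i j. M $ i $ j = (if i = j then p else 0) - q * x$i * x$j"
  shows "det M = p^2 * (p - q * (x \<bullet> x))"
proof -
  define a b c where "a = x$1" "b = x$2" "c = x$3"
  have "det M = (p - q*a*a)*(p - q*b*b)*(p - q*c*c) + (- q*a*b)*(- q*b*c)*(- q*c*a)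
     + (- q*a*c)*(- q*b*a)*(- q*c*b) - (p - q*a*a)*(- q*b*c)*(- q*c*b)
     - (- q*a*b)*(- q*b*a)*(p - q*c*c) - (- q*a*c)*(p - q*b*b)*(- q*c*a)"
    unfolding det_3 M a_b_c_def by simp
  also have "\<dots> = p^2 * (p - q * (a^2 + b^2 + c^2))" by algebra
  finally show ?thesis by (simp add: inner_vec_def sum_3 power2_eq_square a_b_c_def)
qed

lemma abs_det_radial_inversion_deriv:
  fixes x :: "real^3"
  assumes "x \<noteq> 0" "1 \<le> k"
  shows "\<bar>det (matrix (radial_inversion_deriv k x))\<bar> = (real k - 1) / norm x ^ (3 * k)"
proof -
  have n: "0 < norm x" using assms by simp
  have "matrix (radial_inversion_deriv k x) $ i $ j
      = (if i = j then 1 / norm x ^ k else 0) - (k / norm x ^ (k + 2)) * x$i * x$j" for i j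
  proof -
    have "axis j (1::real) $ i = (if i = j then 1 else 0)" by (simp add: axis_def)
    then show ?thesis by (simp add: matrix_def radial_inversion_deriv_def inner_axis mult.commute)
  qed
  then have "det (matrix (radial_inversion_deriv k x))
      = (1 / norm x ^ k)^2 * (1 / norm x ^ k - k / norm x ^ (k + 2) * (x \<bullet> x))"
    by (rule det_scalar_minus_rank_one_3)
  also have "\<dots> = - ((real k - 1) / norm x ^ (3 * k))"
  proof -
    have "norm x ^ (3 * k) = norm x ^ k * (norm x ^ k)^2"
      by (simp flip: power_mult power_add)
    then show ?thesis
      using n by (simp add: power2_norm_eq_inner[symmetric] power_add field_simps power2_eq_square)
  qed
  finally show ?thesis using assms by simp
qed

section \<open>Differentiability up to the boundary of the exterior domain\<close>

lemma segment_linearization_bound: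
  fixes f :: "'a::real_inner \<Rightarrow> real"
  assumes cont: "continuous_on (closed_segment a b) f"
    and deriv: "\<And>x. x \<in> open_segment a b \<Longrightarrow> (f has_derivative (\<lambda>h. h \<bullet> f' x)) (at x)"
    and close: "\<And>x. x \<in> open_segment a b \<Longrightarrow> norm (f' x - g) \<le> e"
  shows "\<bar>f b - f a - (b - a) \<bullet> g\<bar> \<le> e * norm (b - a)"
proof (cases "a = b")
  case False
  define \<gamma> where "\<gamma> t = (1 - t) *\<^sub>R a + t *\<^sub>R b" for t :: real
  define \<phi> where "\<phi> t = f (\<gamma> t) - \<gamma> t \<bullet> g" for t
  have \<gamma>_closed: "\<gamma> ` {0..1} = closed_segment a b"
    by (simp add: \<gamma>_def closed_segment_image_interval)
  have \<gamma>_open: "\<gamma> t \<in> open_segment a b" if "t \<in> {0<..<1}" for t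
    using False that by (simp add: \<gamma>_def open_segment_image_interval)
  have \<gamma>_deriv: "(\<gamma> has_derivative (\<lambda>h. h *\<^sub>R (b - a))) (at t)" for t
    unfolding \<gamma>_def by (auto intro!: derivative_eq_intros simp: algebra_simps)
  have "continuous_on {0..1} \<phi>"
    unfolding \<phi>_def using \<gamma>_closed
    by (intro continuous_intros continuous_on_compose2[OF cont]) (auto simp: \<gamma>_def intro!: continuous_intros)
  moreover have "(\<phi> has_derivative (\<lambda>h. (h *\<^sub>R (b - a)) \<bullet> (f' (\<gamma> t) - g))) (at t)"
    if "0 < t" "t < 1" for t
    unfolding \<phi>_def inner_diff_right
    by (rule has_derivative_diff[OF has_derivative_compose[OF \<gamma>_deriv deriv[OF \<gamma>_open]]])
       (use that in \<open>auto intro!: derivative_eq_intros \<gamma>_deriv\<close>)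
  ultimately obtain t where t: "t \<in> {0<..<1}"
    and mvt: "\<bar>\<phi> 1 - \<phi> 0\<bar> \<le> \<bar>(b - a) \<bullet> (f' (\<gamma> t) - g)\<bar>"
    using mvt_general[of 0 1 \<phi> "\<lambda>t h. (h *\<^sub>R (b - a)) \<bullet> (f' (\<gamma> t) - g)"] by auto
  note mvt
  also have "\<dots> \<le> norm (b - a) * norm (f' (\<gamma> t) - g)"
    by (simp add: Cauchy_Schwarz_ineq2)
  also have "\<dots> \<le> norm (b - a) * e"
    using close[OF \<gamma>_open[OF t]] by (simp add: mult_left_mono)
  finally show ?thesis
    by (simp add: \<phi>_def \<gamma>_def inner_diff_left algebra_simps)
qed simp

lemma extM_iff: "x \<in> extM \<longleftrightarrow> 1 \<le> norm x"
  by (auto simp: extM_def dist_norm)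

lemma interior_extM: "interior extM = {x. 1 < norm x}"
proof -
  have "interior extM = - closure (ball (0::real^3) 1)"
    by (simp add: extM_def interior_complement)
  then show ?thesis by (auto simp: closure_ball dist_norm)
qed

lemma closed_extM: "closed extM"
  by (simp add: extM_def closed_Compl)

lemma open_segment_dilation_outside_ball:
  fixes x :: "'a::real_normed_vector"
  assumes "1 \<le> norm x" "1 < c"
  shows "open_segment x (c *\<^sub>R x) \<subseteq> {z. 1 < norm z}"
proof
  fix z assume z: "z \<in> open_segment x (c *\<^sub>R x)"
  have "x \<noteq> c *\<^sub>R x"
  proof
    assume "x = c *\<^sub>R x"
    then have "(c - 1) *\<^sub>R x = 0" by (simp add: algebra_simps)
    then show False using assms by auto
  qed
  with z obtain t where t: "0 < t" "t < 1" and "z = (1 - t) *\<^sub>R x + t *\<^sub>R (c *\<^sub>R x)"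
    by (auto simp: open_segment_image_interval)
  then have z: "z = (1 + t * (c - 1)) *\<^sub>R x" by (simp add: algebra_simps)
  have pos: "1 < 1 + t * (c - 1)" using t assms by simp
  also have "\<dots> \<le> (1 + t * (c - 1)) * norm x"
    using mult_left_mono[OF assms(1), of "1 + t * (c - 1)"] pos by simp
  also have "\<dots> = norm z" using pos by (metis abs_of_pos norm_scaleR z less_trans zero_less_one)
  finally show "z \<in> {z. 1 < norm z}" by simp
qed

(* The chord dips into the ball by at most d^2/4 in squared norm, which the factor 1 + d
   more than compensates. *)
lemma dilated_chord_outside_ball:
  fixes p y :: "'a::real_inner"
  assumes p: "norm p = 1" and y: "1 \<le> norm y" and d: "norm (y - p) = d" "0 < d" "d < 1/2"
  shows "closed_segment ((1 + d) *\<^sub>R y) ((1 + d) *\<^sub>R p) \<subseteq> {z. 1 < norm z}"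
proof
  fix z assume "z \<in> closed_segment ((1 + d) *\<^sub>R y) ((1 + d) *\<^sub>R p)"
  then obtain t where t: "0 \<le> t" "t \<le> 1"
    and "z = (1 - t) *\<^sub>R ((1 + d) *\<^sub>R y) + t *\<^sub>R ((1 + d) *\<^sub>R p)"
    by (auto simp: closed_segment_image_interval)
  moreover define w where "w = (1 - t) *\<^sub>R y + t *\<^sub>R p"
  ultimately have z: "z = (1 + d) *\<^sub>R w" by (simp add: w_def scaleR_add_right mult.commute)
  have "norm w^2 = (1 - t) * norm y^2 + t * norm p^2 - t * (1 - t) * d^2"
    unfolding d(1)[symmetric] power2_norm_eq_inner w_def
    by (simp add: inner_add_left inner_add_right inner_diff_left inner_diff_right inner_commute algebra_simps)
  moreover have "(1 - t) * 1 \<le> (1 - t) * norm y^2"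
    using t y by (intro mult_left_mono) (auto simp: one_le_power)
  moreover have "t * (1 - t) \<le> 1/4"
    using zero_le_power2[of "t - 1/2"] by (simp add: power2_eq_square algebra_simps)
  ultimately have "1 - d^2/4 \<le> norm w^2"
    using p mult_right_mono[of "t * (1 - t)" "1/4" "d^2"] by simp
  then have lower: "(1 + d)^2 * (1 - d^2/4) \<le> (1 + d)^2 * norm w^2"
    by (rule mult_left_mono) simp
  have "1 < (1 + d)^2 * (1 - d^2/4)"
  proof -
    have "d^2/4 * (1 + d)^2 \<le> d^2/4 * (3/2)^2"
      using d by (intro mult_left_mono power_mono) auto
    moreover have "(1 + d)^2 * (1 - d^2/4) = 1 + 2*d + d^2 - d^2/4 * (1 + d)^2"
      by (simp add: algebra_simps power2_eq_square)
    moreover have "d^2/4 * (3/2)^2 = 9/16 * d^2" by (simp add: power2_eq_square)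
    ultimately show ?thesis using d zero_le_power2[of d] by linarith
  qed
  moreover have "norm z ^ 2 = (1 + d)^2 * norm w^2"
    using d by (simp add: z power_mult_distrib)
  ultimately have "1^2 < norm z ^ 2"
    using lower unfolding power_one by linarith
  then show "z \<in> {z. 1 < norm z}"
    using power2_less_imp_less[of 1 "norm z"] by simp
qed

lemma extM_segment_linearization_bound:
  assumes u: "C1c_M u G" and ab: "a \<in> extM \<inter> cball c r" "b \<in> extM \<inter> cball c r"
    and outside: "open_segment a b \<subseteq> {x. 1 < norm x}"
    and close: "\<And>z. z \<in> extM \<Longrightarrow> z \<in> cball c r \<Longrightarrow> norm (G z - g) \<le> e"
  shows "\<bar>u b - u a - (b - a) \<bullet> g\<bar> \<le> e * norm (b - a)"
proof (rule segment_linearization_bound)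
  have "closed_segment a b \<subseteq> extM"
    using ab outside by (auto simp: closed_segment_eq_open extM_iff)
  then show "continuous_on (closed_segment a b) u"
    using u by (auto simp: C1c_M_def intro: continuous_on_subset)
  show "(u has_derivative (\<lambda>h. h \<bullet> G x)) (at x)" if "x \<in> open_segment a b" for x
    using u outside that by (auto simp: C1c_M_def interior_extM gderiv_def)
  fix x assume x: "x \<in> open_segment a b"
  have "closed_segment a b \<subseteq> cball c r"
    using ab by (intro closed_segment_subset) auto
  moreover have "x \<in> closed_segment a b" using x segment_open_subset_closed by blast
  ultimately show "norm (G x - g) \<le> e"
    using x outside by (intro close) (auto simp: extM_iff)
qed

lemma dilations_near_sphere_point:
  assumes np: "norm p = 1" and ny: "1 \<le> norm y" and d: "norm (y - p) = d" "d < 1/2"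
  shows "(1 + d) *\<^sub>R y \<in> extM \<inter> cball p (3 * d)" and "(1 + d) *\<^sub>R p \<in> extM \<inter> cball p (3 * d)"
    and "norm ((1 + d) *\<^sub>R y - y) \<le> d * (1 + d)"
proof -
  have d0: "0 \<le> d" using d by auto
  have "norm ((1 + d) *\<^sub>R y - y) = d * norm y"
    using d0 by (simp add: algebra_simps)
  moreover have "norm y \<le> 1 + d"
    using norm_triangle_ineq[of "y - p" p] np d by simp
  ultimately show ly: "norm ((1 + d) *\<^sub>R y - y) \<le> d * (1 + d)"
    using mult_left_mono[of "norm y" "1 + d" d] d0 by simp
  moreover have "d * (1 + d) \<le> 2 * d"
    using mult_left_le_one_le[of d d] d d0 by (simp add: algebra_simps)
  ultimately have "norm ((1 + d) *\<^sub>R y - y) + norm (y - p) \<le> 3 * d"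
    using d by linarith
  then have "(1 + d) *\<^sub>R y \<in> cball p (3 * d)"
    using norm_triangle_ineq[of "(1 + d) *\<^sub>R y - y" "y - p"] by (simp add: dist_norm norm_minus_commute)
  then show "(1 + d) *\<^sub>R y \<in> extM \<inter> cball p (3 * d)"
    using ny d0 mult_mono[of 1 "1 + d" 1 "norm y"] by (simp add: extM_iff)
  have "(1 + d) *\<^sub>R p - p = d *\<^sub>R p" by (simp add: algebra_simps)
  then show "(1 + d) *\<^sub>R p \<in> extM \<inter> cball p (3 * d)"
    using np d0 by (simp add: extM_iff dist_norm norm_minus_commute[of p])
qed

(* Apart from its endpoints, the detour y, (1 + d) y, (1 + d) p, p runs outside the closed unit
   ball, so the mean value theorem applies along each of its three legs. *)
lemma sphere_point_linearization_bound:
  assumes u: "C1c_M u G" and np: "norm p = 1" and y: "y \<in> extM"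
    and d: "norm (y - p) = d" "0 < d" "d < 1/2"
    and close: "\<And>z. z \<in> extM \<Longrightarrow> z \<in> cball p (3 * d) \<Longrightarrow> norm (G z - G p) \<le> e"
  shows "\<bar>u y - u p - (y - p) \<bullet> G p\<bar> \<le> 4 * e * d"
proof -
  define l where "l = 1 + d"
  have e: "0 \<le> e" using close[of p] np d by (simp add: extM_iff)
  have ny: "1 \<le> norm y" using y by (simp add: extM_iff)
  note near = dilations_near_sphere_point[OF np ny d(1,3), folded l_def]
  have y_near: "y \<in> extM \<inter> cball p (3 * d)" and p_near: "p \<in> extM \<inter> cball p (3 * d)"
    using y d np by (auto simp: dist_norm norm_minus_commute extM_iff)
  have lp: "norm (l *\<^sub>R p - p) = d" "norm (l *\<^sub>R p - l *\<^sub>R y) = l * d"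
    using np d by (simp add: l_def algebra_simps, simp add: l_def norm_minus_commute flip: scaleR_diff_right)
  have "\<bar>u (l *\<^sub>R y) - u y - (l *\<^sub>R y - y) \<bullet> G p\<bar> \<le> e * norm (l *\<^sub>R y - y)"
    using y_near near(1) d
    by (intro extM_segment_linearization_bound[OF u] open_segment_dilation_outside_ball ny close) (auto simp: l_def)
  moreover have "\<bar>u (l *\<^sub>R p) - u (l *\<^sub>R y) - (l *\<^sub>R p - l *\<^sub>R y) \<bullet> G p\<bar> \<le> e * norm (l *\<^sub>R p - l *\<^sub>R y)"
    using near(1,2) segment_open_subset_closed dilated_chord_outside_ball[OF np ny d]
    by (intro extM_segment_linearization_bound[OF u _ _ _ close]) (auto simp: l_def)
  moreover have "\<bar>u (l *\<^sub>R p) - u p - (l *\<^sub>R p - p) \<bullet> G p\<bar> \<le> e * norm (l *\<^sub>R p - p)"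
    using p_near near(2) np d
    by (intro extM_segment_linearization_bound[OF u] open_segment_dilation_outside_ball close) (auto simp: l_def)
  moreover have "u y - u p - (y - p) \<bullet> G p = - (u (l *\<^sub>R y) - u y - (l *\<^sub>R y - y) \<bullet> G p)
      - (u (l *\<^sub>R p) - u (l *\<^sub>R y) - (l *\<^sub>R p - l *\<^sub>R y) \<bullet> G p) + (u (l *\<^sub>R p) - u p - (l *\<^sub>R p - p) \<bullet> G p)"
    by (simp add: inner_diff_left)
  ultimately have "\<bar>u y - u p - (y - p) \<bullet> G p\<bar> \<le> e * (norm (l *\<^sub>R y - y) + l * d + d)"
    unfolding lp by (simp add: distrib_left)
  also have "\<dots> \<le> e * (d * (1 + d) + (1 + d) * d + d)"
    using near(3) e by (intro mult_left_mono) (auto simp: l_def)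
  also have "\<dots> \<le> 4 * e * d"
    using mult_right_mono[of d "1/2" "e * d"] e d by (simp add: algebra_simps)
  finally show ?thesis .
qed

lemma C1c_M_has_derivative_within:
  assumes u: "C1c_M u G" and p: "p \<in> extM"
  shows "(u has_derivative (\<lambda>h. h \<bullet> G p)) (at p within extM)"
proof (cases "1 < norm p")
  case True
  then show ?thesis
    using u by (auto simp: C1c_M_def gderiv_def interior_extM intro: has_derivative_at_withinI)
next
  case False
  with p have np: "norm p = 1" by (simp add: extM_iff)
  show ?thesis unfolding has_derivative_within_alt
  proof (intro conjI allI impI)
    show "bounded_linear (\<lambda>h. h \<bullet> G p)" by (rule bounded_linear_inner_left)
    fix e :: real assume e: "0 < e"
    obtain \<delta> where \<delta>: "0 < \<delta>" and G_near: "\<And>z. z \<in> extM \<Longrightarrow> dist z p < \<delta> \<Longrightarrow> dist (G z) (G p) < e/4"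
      using u p e unfolding C1c_M_def continuous_on_iff by (metis divide_pos_pos zero_less_numeral)
    show "\<exists>r>0. \<forall>y\<in>extM. norm (y - p) < r \<longrightarrow> norm (u y - u p - (y - p) \<bullet> G p) \<le> e * norm (y - p)"
    proof (intro exI[of _ "min (1/2) (\<delta>/3)"] conjI ballI impI)
      fix y assume y: "y \<in> extM" and small: "norm (y - p) < min (1/2) (\<delta>/3)"
      show "norm (u y - u p - (y - p) \<bullet> G p) \<le> e * norm (y - p)"
      proof (cases "y = p")
        case False
        have "\<bar>u y - u p - (y - p) \<bullet> G p\<bar> \<le> 4 * (e/4) * norm (y - p)"
        proof (rule sphere_point_linearization_bound[OF u np y refl])
          show "norm (G z - G p) \<le> e/4" if "z \<in> extM" "z \<in> cball p (3 * norm (y - p))" for z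
            using G_near[of z] that small by (simp add: dist_norm norm_minus_commute)
        qed (use False small in auto)
        then show ?thesis by simp
      qed simp
    qed (use \<delta> in simp)
  qed
qed

section \<open>Extension across the unit sphere\<close>

lemma C1c_M_vanishes_outside_ball:
  assumes u: "C1c_M u G"
  obtains R where "1 \<le> R" "\<And>x. x \<in> extM \<Longrightarrow> R < norm x \<Longrightarrow> u x = 0 \<and> G x = 0"
proof -
  have "bounded {x \<in> extM. u x \<noteq> 0}"
    using u by (simp add: C1c_M_def compact_closure)
  then obtain R0 where R0: "\<And>x. x \<in> extM \<Longrightarrow> u x \<noteq> 0 \<Longrightarrow> norm x \<le> R0"
    unfolding bounded_iff by blast
  define R where "R = max R0 1"
  have u0: "u x = 0" if "R < norm x" for x
    using R0[of x] that by (force simp: R_def extM_iff)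
  have "G x = 0" if "R < norm x" for x
  proof -
    have "x \<in> interior extM" using that by (simp add: interior_extM R_def)
    with u have "(u has_derivative (\<lambda>h. h \<bullet> G x)) (at x)"
      by (simp add: C1c_M_def gderiv_def)
    moreover have "(u has_derivative (\<lambda>h. 0)) (at x)"
    proof (rule has_derivative_transform_within_open[OF has_derivative_const, where s="{z::real^3. R < norm z}"])
      show "open {z::real^3. R < norm z}" by (simp add: open_Collect_less continuous_on_norm_id)
    qed (use that u0 in auto)
    ultimately have "(\<lambda>h. h \<bullet> G x) = (\<lambda>h. 0)" by (rule has_derivative_unique)
    then show "G x = 0" by (metis inner_eq_zero_iff)
  qed
  with u0 show ?thesis using that[of R] by (simp add: R_def)
qed

lemma radial_inversion_in_extM:
  assumes "0 < norm x" "norm x \<le> 1" "1 \<le> k"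
  shows "radial_inversion k x \<in> extM"
proof -
  have "norm x ^ k \<le> norm x ^ 1" using assms by (intro power_decreasing) auto
  then show ?thesis using assms by (simp add: extM_iff norm_radial_inversion)
qed

(* The coefficients satisfy 3 - 2 = 1 and 3 * 2 - 2 * 3 = 0, so the reflection agrees with u
   to first order on the sphere. *)
definition reflected :: "(real^3 \<Rightarrow> real) \<Rightarrow> real^3 \<Rightarrow> real" where
  "reflected u x = 3 * u (radial_inversion 2 x) - 2 * u (radial_inversion 3 x)"

definition reflected_grad :: "(real^3 \<Rightarrow> real^3) \<Rightarrow> real^3 \<Rightarrow> real^3" where
  "reflected_grad G x = 3 *\<^sub>R radial_inversion_deriv 2 x (G (radial_inversion 2 x))
     - 2 *\<^sub>R radial_inversion_deriv 3 x (G (radial_inversion 3 x))"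

(* The value at the origin is immaterial: the extension vanishes near it. *)
definition exterior_extension :: "(real^3 \<Rightarrow> real) \<Rightarrow> real^3 \<Rightarrow> real" where
  "exterior_extension u x = (if x \<in> extM then u x else if x = 0 then 0 else reflected u x)"

definition exterior_extension_grad :: "(real^3 \<Rightarrow> real^3) \<Rightarrow> real^3 \<Rightarrow> real^3" where
  "exterior_extension_grad G x = (if x \<in> extM then G x else if x = 0 then 0 else reflected_grad G x)"

lemma reflected_sphere:
  assumes "norm x = 1"
  shows "reflected u x = u x" "reflected_grad G x = G x"
proof -
  have "(3::real) *\<^sub>R w = w + 2 *\<^sub>R w" for w :: "real^3"
    using scaleR_add_left[of 1 2 w] by simp
  then show "reflected u x = u x" "reflected_grad G x = G x"
    using assms by (simp_all add: reflected_def reflected_grad_def radial_inversion_sphere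
        radial_inversion_deriv_sphere algebra_simps)
qed

lemma has_derivative_reflected:
  assumes u: "C1c_M u G" and x: "x \<in> Q" and Q: "Q \<subseteq> {z. 0 < norm z \<and> norm z \<le> 1}"
  shows "(reflected u has_derivative (\<lambda>h. h \<bullet> reflected_grad G x)) (at x within Q)"
proof -
  have x0: "x \<noteq> 0" using x Q by auto
  have "((\<lambda>z. u (radial_inversion k z)) has_derivative
      (\<lambda>h. radial_inversion_deriv k x h \<bullet> G (radial_inversion k x))) (at x within Q)"
    if "1 \<le> k" for k
  proof (rule has_derivative_in_compose2[OF _ _ x has_derivative_radial_inversion[OF x0]])
    show "\<And>z. z \<in> extM \<Longrightarrow> (u has_derivative (\<lambda>h. h \<bullet> G z)) (at z within extM)"
      using u by (rule C1c_M_has_derivative_within)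
    show "radial_inversion k ` Q \<subseteq> extM"
      using Q that by (auto intro!: radial_inversion_in_extM)
  qed
  then have "(reflected u has_derivative (\<lambda>h. 3 * (radial_inversion_deriv 2 x h \<bullet> G (radial_inversion 2 x))
      - 2 * (radial_inversion_deriv 3 x h \<bullet> G (radial_inversion 3 x)))) (at x within Q)"
    unfolding reflected_def by (intro has_derivative_diff has_derivative_mult_right) auto
  then show ?thesis
    by (simp add: reflected_grad_def radial_inversion_deriv_symmetric inner_diff_right)
qed

lemma has_derivative_exterior_extension:
  assumes u: "C1c_M u G" and x0: "x \<noteq> 0"
  shows "(exterior_extension u has_derivative (\<lambda>h. h \<bullet> exterior_extension_grad G x)) (at x)"
proof -
  define T where "T = {z::real^3. 0 < norm z \<and> norm z \<le> 1}"
  have closure_T: "closure T \<subseteq> cball 0 1"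
    by (rule closure_minimal) (auto simp: T_def)
  have boundary: "closure extM \<inter> closure T \<subseteq> {z. norm z = 1}"
    using closure_T closed_extM by (force simp: extM_iff)
  have "((\<lambda>x. if x \<in> extM then u x else reflected u x) has_derivative
      (if x \<in> extM then (\<lambda>h. h \<bullet> G x) else (\<lambda>h. h \<bullet> reflected_grad G x))) (at x within (extM \<union> T))"
  proof (rule has_derivative_If_within_closures)
    show "(u has_derivative (\<lambda>h. h \<bullet> G x)) (at x within extM \<union> (closure extM \<inter> closure T))"
      if "x \<in> extM \<union> (closure extM \<inter> closure T)"
      using that closed_extM C1c_M_has_derivative_within[OF u] by (simp add: Un_absorb2 inf.coboundedI1)
    show "(reflected u has_derivative (\<lambda>h. h \<bullet> reflected_grad G x))
        (at x within T \<union> (closure extM \<inter> closure T))"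
      if "x \<in> T \<union> (closure extM \<inter> closure T)"
      using that boundary by (intro has_derivative_reflected[OF u]) (auto simp: T_def)
    show "u x = reflected u x" "(\<lambda>h. h \<bullet> G x) = (\<lambda>h. h \<bullet> reflected_grad G x)"
      if "x \<in> closure extM" "x \<in> closure T"
      using that boundary reflected_sphere(1)[of x u] reflected_sphere(2)[of x G] by auto
    show "x \<in> extM \<union> T" using x0 by (auto simp: T_def extM_iff)
  qed
  moreover have "at x within (extM \<union> T) = at x"
  proof -
    have "extM \<union> T = - {0}" by (auto simp: T_def extM_iff)
    then show ?thesis using x0 by (intro at_within_open) auto
  qed
  ultimately have "((\<lambda>x. if x \<in> extM then u x else reflected u x) has_derivative
      (\<lambda>h. h \<bullet> exterior_extension_grad G x)) (at x)"
    using x0 by (cases "x \<in> extM") (simp_all add: exterior_extension_grad_def)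
  then show ?thesis
    by (rule has_derivative_transform_within_open[where s="- {0}"])
       (use x0 in \<open>auto simp: exterior_extension_def\<close>)
qed

section \<open>Integral estimates\<close>

lemma continuous_bounded_support_integral:
  fixes f :: "'a::euclidean_space \<Rightarrow> real"
  assumes S: "closed S" and f: "continuous_on S f"
    and supp: "\<And>x. x \<in> S \<Longrightarrow> R < norm x \<Longrightarrow> f x = 0"
  shows "f absolutely_integrable_on S" and "(LINT x:S|lborel. f x) = integral S f"
proof -
  define K where "K = S \<inter> cball 0 R"
  have "(\<lambda>x. indicator S x *\<^sub>R f x) = (\<lambda>x. indicator K x *\<^sub>R f x)"
    using supp by (force simp: indicator_def K_def)
  moreover have "integrable lborel (\<lambda>x. indicator K x *\<^sub>R f x)"
    using S f by (intro borel_integrable_compact closed_Int_compact continuous_on_subset[OF f])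
      (auto simp: K_def)
  ultimately have int: "integrable lborel (\<lambda>x. indicator S x *\<^sub>R f x)" by simp
  then have meas: "(\<lambda>x. indicator S x *\<^sub>R f x) \<in> borel_measurable lborel"
    by (rule borel_measurable_integrable)
  show si: "f absolutely_integrable_on S"
    using int meas by (simp add: set_integrable_def integrable_completion)
  have "(LINT x:S|lborel. f x) = (LINT x:S|lebesgue. f x)"
    unfolding set_lebesgue_integral_def using integral_completion[OF meas] by simp
  also have "\<dots> = integral S f" by (rule set_lebesgue_integral_eq_integral(2)[OF si])
  finally show "(LINT x:S|lborel. f x) = integral S f" .
qed

lemma Lp_norm_on_eq_integral:
  fixes f :: "real^3 \<Rightarrow> real"
  assumes S: "closed S" and f: "continuous_on S f"
    and supp: "\<And>x. x \<in> S \<Longrightarrow> R < norm x \<Longrightarrow> f x = 0" and p: "0 < p"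
  shows "(\<lambda>x. \<bar>f x\<bar> powr p) absolutely_integrable_on S"
    and "Lp_norm_on p S f = integral S (\<lambda>x. \<bar>f x\<bar> powr p) powr (1/p)"
proof -
  have cont: "continuous_on S (\<lambda>x. \<bar>f x\<bar> powr p)"
    using p by (intro continuous_on_powr' continuous_on_rabs f continuous_on_const) auto
  have vanish: "\<And>x. x \<in> S \<Longrightarrow> R < norm x \<Longrightarrow> \<bar>f x\<bar> powr p = 0"
    using supp by simp
  note integral = continuous_bounded_support_integral[OF S cont vanish]
  show "(\<lambda>x. \<bar>f x\<bar> powr p) absolutely_integrable_on S"
    by (rule integral(1))
  show "Lp_norm_on p S f = integral S (\<lambda>x. \<bar>f x\<bar> powr p) powr (1/p)"
    using integral(2) by (simp add: Lp_norm_on_def)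
qed

lemma Lp_norm_on_2_eq_sqrt:
  fixes f :: "real^3 \<Rightarrow> real"
  assumes S: "closed S" and f: "continuous_on S f"
    and supp: "\<And>x. x \<in> S \<Longrightarrow> R < norm x \<Longrightarrow> f x = 0"
  shows "Lp_norm_on 2 S f = sqrt (integral S (\<lambda>x. f x ^ 2))"
proof -
  note Lp = Lp_norm_on_eq_integral[where R = R and p = 2, OF S f supp]
  have "0 \<le> integral S (\<lambda>x. \<bar>f x\<bar> powr 2)"
    using Lp(1) set_lebesgue_integral_eq_integral(1) by (intro integral_nonneg) auto
  then show ?thesis
    using Lp(2) by (simp add: powr_half_sqrt powr_numeral)
qed

lemma Lp_norm_on_le_extension:
  fixes f g :: "real^3 \<Rightarrow> real"
  assumes S: "closed S" and f: "continuous_on S f" and g: "continuous_on UNIV g"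
    and ext: "\<And>x. x \<in> S \<Longrightarrow> g x = f x" and supp: "\<And>x. R < norm x \<Longrightarrow> g x = 0" and p: "0 < p"
  shows "Lp_norm_on p S f \<le> Lp_norm_on p UNIV g"
proof -
  have "f x = 0" if "x \<in> S" "R < norm x" for x
    using ext[OF that(1)] supp[OF that(2)] by simp
  note Lp_S = Lp_norm_on_eq_integral[OF S f this p]
  note Lp_UNIV = Lp_norm_on_eq_integral[OF closed_UNIV g supp p]
  have "S \<in> sets lebesgue" using S by (simp add: borel_closed sets_completionI_sets)
  then have "(\<lambda>x. \<bar>g x\<bar> powr p) integrable_on S"
    using set_integrable_subset[OF Lp_UNIV(1)] set_lebesgue_integral_eq_integral(1) by blast
  moreover have "(\<lambda>x. \<bar>g x\<bar> powr p) integrable_on UNIV"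
    using Lp_UNIV(1) set_lebesgue_integral_eq_integral(1) by blast
  ultimately have "integral S (\<lambda>x. \<bar>g x\<bar> powr p) \<le> integral UNIV (\<lambda>x. \<bar>g x\<bar> powr p)"
    by (rule integral_subset_le[OF subset_UNIV]) simp
  moreover have "integral S (\<lambda>x. \<bar>f x\<bar> powr p) = integral S (\<lambda>x. \<bar>g x\<bar> powr p)"
    using ext by (intro integral_cong) simp
  moreover have "0 \<le> integral S (\<lambda>x. \<bar>f x\<bar> powr p)"
    using Lp_S(1) set_lebesgue_integral_eq_integral(1) by (intro integral_nonneg) auto
  ultimately have "integral S (\<lambda>x. \<bar>f x\<bar> powr p) powr (1/p)
      \<le> integral UNIV (\<lambda>x. \<bar>g x\<bar> powr p) powr (1/p)"
    using p by (simp add: powr_mono2)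
  moreover have "Lp_norm_on p S f = integral S (\<lambda>x. \<bar>f x\<bar> powr p) powr (1/p)"
    by (rule Lp_S(2))
  moreover have "Lp_norm_on p UNIV g = integral UNIV (\<lambda>x. \<bar>g x\<bar> powr p) powr (1/p)"
    by (rule Lp_UNIV(2))
  ultimately show ?thesis by simp
qed

lemma change_of_variables_scalar:
  fixes f :: "real^'m::{finite,wellorder} \<Rightarrow> real" and g :: "real^'m::_ \<Rightarrow> real^'m::_"
  assumes S: "S \<in> sets lebesgue" and g': "\<And>x. x \<in> S \<Longrightarrow> (g has_derivative g' x) (at x within S)"
    and inj: "inj_on g S" and f: "f absolutely_integrable_on (g ` S)"
  shows "(\<lambda>x. \<bar>det (matrix (g' x))\<bar> * f (g x)) absolutely_integrable_on S"
    and "integral S (\<lambda>x. \<bar>det (matrix (g' x))\<bar> * f (g x)) = integral (g ` S) f"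
proof -
  have "(\<lambda>x. \<bar>det (matrix (g' x))\<bar> *\<^sub>R vec (f (g x)) :: real^1) absolutely_integrable_on S \<and>
      integral S (\<lambda>x. \<bar>det (matrix (g' x))\<bar> *\<^sub>R vec (f (g x)) :: real^1) = vec (integral (g ` S) f)
    \<longleftrightarrow> (\<lambda>x. vec (f x) :: real^1) absolutely_integrable_on (g ` S) \<and>
      integral (g ` S) (\<lambda>x. vec (f x) :: real^1) = vec (integral (g ` S) f)"
    by (rule has_absolute_integral_change_of_variables[OF S g' inj])
  then have "(\<lambda>x. \<bar>det (matrix (g' x))\<bar> *\<^sub>R vec (f (g x)) :: real^1) absolutely_integrable_on S \<and>
      integral S (\<lambda>x. \<bar>det (matrix (g' x))\<bar> *\<^sub>R vec (f (g x)) :: real^1) = vec (integral (g ` S) f)"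
    using f by (simp add: absolutely_integrable_on_1_iff integral_on_1_eq)
  then show "(\<lambda>x. \<bar>det (matrix (g' x))\<bar> * f (g x)) absolutely_integrable_on S"
    and "integral S (\<lambda>x. \<bar>det (matrix (g' x))\<bar> * f (g x)) = integral (g ` S) f"
    by (simp_all add: absolutely_integrable_on_1_iff integral_on_1_eq vec_eq_iff)
qed

lemma radial_inversion_pullback_integral_le:
  fixes f :: "real^3 \<Rightarrow> real"
  assumes f: "f absolutely_integrable_on extM" and f_nonneg: "\<And>x. 0 \<le> f x" and k: "2 \<le> k"
  shows "(\<lambda>x. \<bar>det (matrix (radial_inversion_deriv k x))\<bar> * f (radial_inversion k x))
      absolutely_integrable_on (ball 0 1 - {0})" (is ?integrable)
    and "integral (ball 0 1 - {0}) (\<lambda>x. \<bar>det (matrix (radial_inversion_deriv k x))\<bar> * f (radial_inversion k x))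
      \<le> integral extM f" (is ?bound)
proof -
  define B where "B = ball (0::real^3) 1 - {0}"
  have B: "B \<in> sets lebesgue" "B \<subseteq> - {0}"
    by (auto simp: B_def borel_open sets_completionI_sets)
  have image: "radial_inversion k ` B \<subseteq> extM"
    using k by (auto simp: B_def intro!: radial_inversion_in_extM)
  have deriv: "(radial_inversion k has_derivative radial_inversion_deriv k x) (at x within B)"
    if "x \<in> B" for x
    using that B by (intro has_derivative_radial_inversion) auto
  then have "radial_inversion k ` B \<in> sets lebesgue"
    using B by (intro differentiable_image_in_sets_lebesgue) (auto simp: differentiable_on_def differentiable_def)
  then have "f absolutely_integrable_on (radial_inversion k ` B)"
    by (rule set_integrable_subset[OF f _ image])
  note cov = change_of_variables_scalar[OF B(1) deriv inj_on_subset[OF inj_on_radial_inversion[OF k] B(2)] this]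
  show ?integrable using cov(1) by (simp add: B_def)
  have "integral (radial_inversion k ` B) f \<le> integral extM f"
    using \<open>f absolutely_integrable_on (radial_inversion k ` B)\<close> f image f_nonneg
    by (intro integral_subset_le set_lebesgue_integral_eq_integral(1)) auto
  then show ?bound using cov(2) by (simp add: B_def)
qed

lemma norm_reflected_grad_sq_le:
  assumes x0: "x \<noteq> 0" and x1: "norm x < 1"
  shows "norm (reflected_grad G x)^2
    \<le> 18 * (\<bar>det (matrix (radial_inversion_deriv 2 x))\<bar> * norm (G (radial_inversion 2 x))^2)
     + 16 * (\<bar>det (matrix (radial_inversion_deriv 3 x))\<bar> * norm (G (radial_inversion 3 x))^2)"
proof -
  define r where "r = norm x"
  define a where "a = norm (G (radial_inversion 2 x))"
  define b where "b = norm (G (radial_inversion 3 x))"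
  have r: "0 < r" "r < 1" using x0 x1 by (auto simp: r_def)
  have "norm (reflected_grad G x) \<le> 3 * norm (radial_inversion_deriv 2 x (G (radial_inversion 2 x)))
      + 2 * norm (radial_inversion_deriv 3 x (G (radial_inversion 3 x)))"
    unfolding reflected_grad_def by (rule order_trans[OF norm_triangle_ineq4]) simp
  also have "\<dots> \<le> 3 * (a / r^2) + 2 * (2 * b / r^3)"
    using norm_radial_inversion_deriv_le[OF x0, of 2] norm_radial_inversion_deriv_le[OF x0, of 3]
    by (intro add_mono mult_left_mono) (auto simp: a_def b_def r_def)
  finally have "norm (reflected_grad G x)^2 \<le> (3 * (a / r^2) + 4 * (b / r^3))^2"
    by (intro power_mono) auto
  also have "\<dots> \<le> 18 * (a / r^2)^2 + 32 * (b / r^3)^2"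
  proof -
    have "(3 * A + 4 * B)^2 \<le> 18 * A^2 + 32 * B^2" for A B :: real
      using zero_le_power2[of "3 * A - 4 * B"] by (simp add: power2_eq_square algebra_simps)
    then show ?thesis .
  qed
  also have "\<dots> \<le> 18 * (1 / r^6 * a^2) + 16 * (2 / r^9 * b^2)"
  proof (intro add_mono mult_left_mono)
    have "a^2 / r^4 \<le> a^2 / r^6" "b^2 / r^6 \<le> b^2 / r^9"
      using r by (auto intro!: divide_left_mono power_decreasing)
    then show "(a / r^2)^2 \<le> 1 / r^6 * a^2" "32 * (b / r^3)^2 \<le> 16 * (2 / r^9 * b^2)"
      by (simp_all add: power_divide flip: power_mult)
  qed auto
  also have "\<dots> = 18 * (\<bar>det (matrix (radial_inversion_deriv 2 x))\<bar> * a^2)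
      + 16 * (\<bar>det (matrix (radial_inversion_deriv 3 x))\<bar> * b^2)"
    using x0 by (simp add: abs_det_radial_inversion_deriv r_def)
  finally show ?thesis by (simp add: a_def b_def)
qed

locale exterior_C1c_function =
  fixes u :: "real^3 \<Rightarrow> real" and G :: "real^3 \<Rightarrow> real^3" and R :: real
  assumes C1c: "C1c_M u G" and R_ge_1: "1 \<le> R"
    and vanishes: "\<And>x. x \<in> extM \<Longrightarrow> R < norm x \<Longrightarrow> u x = 0 \<and> G x = 0"
begin

lemma extension_vanishes_outside:
  "R < norm x \<Longrightarrow> exterior_extension u x = 0 \<and> exterior_extension_grad G x = 0"
  using vanishes[of x] R_ge_1
  by (simp add: exterior_extension_def exterior_extension_grad_def extM_iff)

lemma extension_vanishes_near_0:
  assumes x: "norm x < 1 / R"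
  shows "exterior_extension u x = 0 \<and> exterior_extension_grad G x = 0"
proof (cases "x = 0")
  case False
  then have n: "0 < norm x" by simp
  have "1 / R \<le> 1" using R_ge_1 by simp
  with x have x1: "norm x < 1" by linarith
  have "R < norm (radial_inversion k x)" if "2 \<le> k" for k
  proof -
    have "R < 1 / norm x" using x n R_ge_1 by (simp add: field_simps)
    also have "\<dots> = norm x / norm x ^ 2" by (simp add: power2_eq_square)
    also have "\<dots> \<le> norm x / norm x ^ k"
      using that n x1 by (intro divide_left_mono power_decreasing) auto
    finally show ?thesis by (simp add: norm_radial_inversion)
  qed
  moreover have "radial_inversion k x \<in> extM" if "1 \<le> k" for k
    using n x1 that by (simp add: radial_inversion_in_extM)
  ultimately have "u (radial_inversion k x) = 0 \<and> G (radial_inversion k x) = 0" if "2 \<le> k" for k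
    using vanishes that by simp
  then show ?thesis
    using x1 by (simp add: exterior_extension_def exterior_extension_grad_def extM_iff reflected_def
        reflected_grad_def radial_inversion_deriv_def)
qed (simp add: exterior_extension_def exterior_extension_grad_def extM_iff)

lemma continuous_on_exterior_extension_grad:
  "continuous_on UNIV (exterior_extension_grad G)"
proof -
  have cG: "continuous_on extM G" using C1c by (simp add: C1c_M_def)
  define r where "r = 1 / (2 * R)"
  have r: "0 < r" "r < 1 / R" "r < 1" using R_ge_1 by (auto simp: r_def field_simps)
  define A where "A = {z::real^3. r \<le> norm z \<and> norm z \<le> 1}"
  have "continuous_on extM (exterior_extension_grad G)"
    using cG by (rule continuous_on_eq) (simp add: exterior_extension_grad_def)
  moreover have "continuous_on A (exterior_extension_grad G)"
  proof (rule continuous_on_eq)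
    have A0: "0 \<notin> A" using r by (auto simp: A_def)
    have "continuous_on A (\<lambda>x. G (radial_inversion k x))" if "1 \<le> k" for k
      using r that
      by (intro continuous_on_compose2[OF cG continuous_on_radial_inversion[OF A0]])
         (auto simp: A_def intro!: radial_inversion_in_extM)
    then show "continuous_on A (reflected_grad G)"
      unfolding reflected_grad_def radial_inversion_deriv_def
      using A0 by (intro continuous_intros) auto
  next
    fix x assume "x \<in> A"
    then show "reflected_grad G x = exterior_extension_grad G x"
      using r by (cases "norm x = 1")
        (auto simp: exterior_extension_grad_def extM_iff A_def reflected_sphere)
  qed
  moreover have "continuous_on (cball 0 r) (exterior_extension_grad G)"
    by (rule continuous_on_eq[of _ "\<lambda>x. 0"]) (use extension_vanishes_near_0 r in auto)
  moreover have "closed A"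
    unfolding A_def by (intro closed_Collect_conj closed_Collect_le continuous_intros)
  moreover have "UNIV = extM \<union> (A \<union> cball 0 r)" by (auto simp: A_def extM_iff)
  ultimately show ?thesis
    by (metis continuous_on_closed_Un closed_extM closed_Un closed_cball)
qed

lemma C1c_R3_exterior_extension: "C1c_R3 (exterior_extension u) (exterior_extension_grad G)"
  unfolding C1c_R3_def
proof (intro conjI allI continuous_on_exterior_extension_grad)
  fix x :: "real^3"
  show "GDERIV (exterior_extension u) x :> exterior_extension_grad G x"
  proof (cases "x = 0")
    case True
    have "(exterior_extension u has_derivative (\<lambda>h. 0)) (at x)"
    proof (rule has_derivative_transform_within_open[OF has_derivative_const, where s="ball 0 (1/R)"])
      show "x \<in> ball 0 (1/R)" using True R_ge_1 by simp
    qed (use extension_vanishes_near_0 in auto)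
    then show ?thesis
      using extension_vanishes_near_0[of x] True R_ge_1 by (simp add: gderiv_def)
  qed (simp add: gderiv_def has_derivative_exterior_extension[OF C1c])
next
  have "{x. exterior_extension u x \<noteq> 0} \<subseteq> cball 0 R"
    using extension_vanishes_outside by (force simp: not_less)
  then show "compact (closure {x. exterior_extension u x \<noteq> 0})"
    by (meson bounded_cball bounded_subset compact_closure)
qed

lemma grad_sq_absolutely_integrable: "(\<lambda>x. norm (G x)^2) absolutely_integrable_on extM"
  using C1c vanishes unfolding C1c_M_def
  by (intro continuous_bounded_support_integral(1)[OF closed_extM, of _ R] continuous_intros) auto

lemma extension_grad_sq_integrable:
  assumes "S \<in> sets lebesgue"
  shows "(\<lambda>x. norm (exterior_extension_grad G x)^2) integrable_on S"
proof -
  have "(\<lambda>x. norm (exterior_extension_grad G x)^2) absolutely_integrable_on UNIV"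
    using extension_vanishes_outside
    by (intro continuous_bounded_support_integral(1)[OF closed_UNIV, of _ R] continuous_intros
        continuous_on_exterior_extension_grad) auto
  then show ?thesis
    using set_integrable_subset[OF _ assms] set_lebesgue_integral_eq_integral(1) by blast
qed

lemma reflected_grad_energy_le:
  "integral (ball 0 1 - {0}) (\<lambda>x. norm (exterior_extension_grad G x)^2)
    \<le> 34 * integral extM (\<lambda>x. norm (G x)^2)"
proof -
  define B where "B = ball (0::real^3) 1 - {0}"
  define H where "H k = (\<lambda>x. \<bar>det (matrix (radial_inversion_deriv k x))\<bar> * norm (G (radial_inversion k x))^2)"
    for k
  have H: "H k integrable_on B" "integral B (H k) \<le> integral extM (\<lambda>x. norm (G x)^2)" if "2 \<le> k" for k
    using radial_inversion_pullback_integral_le[OF grad_sq_absolutely_integrable _ that]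
      set_lebesgue_integral_eq_integral(1) by (auto simp: H_def B_def)
  have "integral B (\<lambda>x. norm (exterior_extension_grad G x)^2) \<le> integral B (\<lambda>x. 18 * H 2 x + 16 * H 3 x)"
  proof (rule integral_le)
    show "(\<lambda>x. norm (exterior_extension_grad G x)^2) integrable_on B"
      by (rule extension_grad_sq_integrable) (simp add: B_def borel_open sets_completionI_sets)
    show "(\<lambda>x. 18 * H 2 x + 16 * H 3 x) integrable_on B"
      using H(1)[of 2] H(1)[of 3] by (intro integrable_add integrable_on_mult_right) auto
    fix x assume "x \<in> B"
    then show "norm (exterior_extension_grad G x)^2 \<le> 18 * H 2 x + 16 * H 3 x"
      using norm_reflected_grad_sq_le[of x G] by (simp add: B_def H_def exterior_extension_grad_def extM_iff)
  qed
  also have "\<dots> = 18 * integral B (H 2) + 16 * integral B (H 3)"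
    using H(1)[of 2] H(1)[of 3] by (simp add: integral_add integrable_on_mult_right)
  also have "\<dots> \<le> 34 * integral extM (\<lambda>x. norm (G x)^2)"
    using H(2)[of 2] H(2)[of 3] by simp
  finally show ?thesis by (simp add: B_def)
qed

lemma extension_grad_energy_le:
  "integral UNIV (\<lambda>x. norm (exterior_extension_grad G x)^2) \<le> 35 * integral extM (\<lambda>x. norm (G x)^2)"
proof -
  define B where "B = ball (0::real^3) 1 - {0}"
  have "integral UNIV (\<lambda>x. norm (exterior_extension_grad G x)^2)
      = integral (extM \<union> B) (\<lambda>x. norm (exterior_extension_grad G x)^2)"
    by (intro empty_imp_negligible integral_spike_set)
      (auto simp: B_def exterior_extension_grad_def extM_iff)
  also have "\<dots> = integral extM (\<lambda>x. norm (G x)^2) + integral B (\<lambda>x. norm (exterior_extension_grad G x)^2)"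
  proof -
    have "extM \<inter> B = {}" by (auto simp: B_def extM_iff)
    moreover have "extM \<in> sets lebesgue" "B \<in> sets lebesgue"
      using closed_extM by (simp_all add: B_def borel_closed borel_open sets_completionI_sets)
    ultimately show ?thesis
      using extension_grad_sq_integrable
      by (simp add: exterior_extension_grad_def cong: integral_cong)
  qed
  also have "\<dots> \<le> 35 * integral extM (\<lambda>x. norm (G x)^2)"
    using reflected_grad_energy_le
      integral_nonneg[OF set_lebesgue_integral_eq_integral(1)[OF grad_sq_absolutely_integrable]]
    by (simp add: B_def)
  finally show ?thesis .
qed

lemma Lp_norm_exterior_extension_ge:
  assumes "0 < p"
  shows "Lp_norm_on p extM u \<le> Lp_norm_on p UNIV (exterior_extension u)"
proof (rule Lp_norm_on_le_extension[OF closed_extM _ _ _ _ assms, where R = R])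
  show "continuous_on extM u" using C1c by (simp add: C1c_M_def)
  show "continuous_on UNIV (exterior_extension u)"
    using C1c_R3_exterior_extension
    by (metis C1c_R3_def continuous_at_imp_continuous_on gderiv_def has_derivative_continuous)
  show "exterior_extension u x = 0" if "R < norm x" for x
    using extension_vanishes_outside[OF that] by simp
qed (simp add: exterior_extension_def)

lemma Lp_norm_exterior_extension_grad:
  shows "Lp_norm_on 2 extM (\<lambda>x. norm (G x)) \<le> Lp_norm_on 2 UNIV (\<lambda>x. norm (exterior_extension_grad G x))"
    and "Lp_norm_on 2 UNIV (\<lambda>x. norm (exterior_extension_grad G x)) \<le> sqrt 35 * Lp_norm_on 2 extM (\<lambda>x. norm (G x))"
proof -
  have cG: "continuous_on extM (\<lambda>x. norm (G x))" using C1c by (simp add: C1c_M_def continuous_on_norm)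
  have cGe: "continuous_on UNIV (\<lambda>x. norm (exterior_extension_grad G x))"
    by (intro continuous_on_norm continuous_on_exterior_extension_grad)
  show "Lp_norm_on 2 extM (\<lambda>x. norm (G x)) \<le> Lp_norm_on 2 UNIV (\<lambda>x. norm (exterior_extension_grad G x))"
  proof (rule Lp_norm_on_le_extension[OF closed_extM cG cGe, where R = R])
    show "norm (exterior_extension_grad G x) = 0" if "R < norm x" for x
      using extension_vanishes_outside[OF that] by simp
  qed (simp_all add: exterior_extension_grad_def)
  have "Lp_norm_on 2 UNIV (\<lambda>x. norm (exterior_extension_grad G x))
      = sqrt (integral UNIV (\<lambda>x. norm (exterior_extension_grad G x)^2))"
    using extension_vanishes_outside by (intro Lp_norm_on_2_eq_sqrt[OF closed_UNIV cGe, where R = R]) auto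
  also have "\<dots> \<le> sqrt (35 * integral extM (\<lambda>x. norm (G x)^2))"
    using extension_grad_energy_le by simp
  also have "\<dots> = sqrt 35 * Lp_norm_on 2 extM (\<lambda>x. norm (G x))"
    using vanishes by (simp add: real_sqrt_mult Lp_norm_on_2_eq_sqrt[OF closed_extM cG, where R = R])
  finally show "Lp_norm_on 2 UNIV (\<lambda>x. norm (exterior_extension_grad G x))
      \<le> sqrt 35 * Lp_norm_on 2 extM (\<lambda>x. norm (G x))" .
qed

end

lemma le_mult_of_comparable:
  fixes a x y A c :: real
  assumes "0 \<le> a" "a \<le> A * y" "0 \<le> x" "x \<le> y" "y \<le> c * x"
  shows "a \<le> c * A * x"
proof (cases "0 \<le> A")
  case True
  then show ?thesis
    using assms mult_left_mono[of y "c * x" A] by (simp add: algebra_simps)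
next
  case False
  then have "A * y = 0"
    using assms mult_nonpos_nonneg[of A y] by linarith
  then have "y = 0" using False by simp
  then show ?thesis using assms by simp
qed

lemma sqrt_35_le: "sqrt 35 \<le> 2 * (2 + sqrt 2)"
proof -
  have "sqrt 35 \<le> sqrt 36" by (rule real_sqrt_le_mono) simp
  also have "\<dots> = 6" by (simp add: real_sqrt_eq_iff)
  also have "\<dots> \<le> 2 * (2 + sqrt 2)" using real_sqrt_ge_one[of 2] by simp
  finally show ?thesis .
qed

theorem theorem5p3:
  fixes A :: real
  assumes sob: "\<And>v G. C1c_R3 v G \<Longrightarrow>
      Lp_norm_on 6 UNIV v \<le> A * Lp_norm_on 2 UNIV (\<lambda>x. norm (G x))"
    and u: "C1c_M u G"
  shows "Lp_norm_on 6 extM u \<le> 2 * (2 + sqrt 2) * A * Lp_norm_on 2 extM (\<lambda>x. norm (G x))"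
proof -
  obtain R where "1 \<le> R" "\<And>x. x \<in> extM \<Longrightarrow> R < norm x \<Longrightarrow> u x = 0 \<and> G x = 0"
    using C1c_M_vanishes_outside_ball[OF u] by blast
  with u interpret exterior_C1c_function u G R by unfold_locales
  note grad = Lp_norm_exterior_extension_grad
  show ?thesis
  proof (rule le_mult_of_comparable[OF _ _ _ grad(1)])
    show "Lp_norm_on 6 extM u \<le> A * Lp_norm_on 2 UNIV (\<lambda>x. norm (exterior_extension_grad G x))"
      using Lp_norm_exterior_extension_ge[of 6] sob[OF C1c_R3_exterior_extension] by simp
    show "Lp_norm_on 2 UNIV (\<lambda>x. norm (exterior_extension_grad G x))
        \<le> 2 * (2 + sqrt 2) * Lp_norm_on 2 extM (\<lambda>x. norm (G x))"
      using grad(2) sqrt_35_le by (rule order_trans[OF _ mult_right_mono]) (simp add: Lp_norm_on_def)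
  qed (simp_all add: Lp_norm_on_def)
qed

end
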